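(* Let $m\le k\le n$ be positive integers and $\mathbf a_1,\dots,\mathbf a_n\in\mathbb R^m$. Let $(\hat{\mathbf x},\hat w)$ be an optimal solution of the convex relaxation $$\max_{\mathbf x,w}\Big\{w:\ w\le \Big[\det\Big(\sum_{i\in[n]}x_i\mathbf a_i\mathbf a_i^\top\Big)\Big]^{1/m},\ \sum_{i\in[n]}x_i=k,\ \mathbf x\in[0,1]^n\Big\}.$$ Let $\mathcal S$ be the random size-$k$ subset of $[n]$ with $$\Pr[\mathcal S=S]=\frac{\prod_{j\in S}\hat x_j}{\sum_{\bar S\subseteq[n],|\bar S|=k}\prod_{i\in\bar S}\hat x_i}\quad\text{for every } S\subseteq[n],\ |S|=k.$$ Then for every $T\subseteq[n]$ with $|T|=m$, $$\Pr[T\subseteq\mathcal S]\ge \frac{1}{g(m,n,k)}\prod_{i\in T}\hat x_i,$$ where $$g(m,n,k)=\max_y\Big\{\sum_{\tau=0}^{m}\frac{\binom{n-m}{k-\tau}}{(n-m)^{m-\tau}\binom{n-m}{k-m}}\cdot\frac{\binom{m}{\tau}}{m^{\tau}}(k-y)^{m-\tau}y^{\tau}:\ \frac{mk}{n}\le y\le m\Big\}.$$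
   Context: $[n]=\{1,\dots,n\}$; binomial coefficients $\binom{a}{b}$ are $0$ when $b>a$ or $b<0$. *)

theory Defs
  imports Complex_Main "Jordan_Normal_Form.Determinant"
begin

definition info_mat :: "nat \<Rightarrow> nat \<Rightarrow> (nat \<Rightarrow> real Matrix.vec) \<Rightarrow> (nat \<Rightarrow> real) \<Rightarrow> real Matrix.mat" where
  "info_mat m n a x = Matrix.mat m m (\<lambda>(r, c). \<Sum>i\<in>{1..n}. x i * (a i $ r) * (a i $ c))"

definition relax_feasible :: "nat \<Rightarrow> nat \<Rightarrow> nat \<Rightarrow> (nat \<Rightarrow> real Matrix.vec) \<Rightarrow> (nat \<Rightarrow> real) \<Rightarrow> real \<Rightarrow> bool" where
  "relax_feasible m n k a x w \<longleftrightarrow>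
     w \<le> root m (det (info_mat m n a x)) \<and>
     (\<Sum>i\<in>{1..n}. x i) = real k \<and>
     (\<forall>i\<in>{1..n}. 0 \<le> x i \<and> x i \<le> 1)"

definition relax_optimal :: "nat \<Rightarrow> nat \<Rightarrow> nat \<Rightarrow> (nat \<Rightarrow> real Matrix.vec) \<Rightarrow> (nat \<Rightarrow> real) \<Rightarrow> real \<Rightarrow> bool" where
  "relax_optimal m n k a x w \<longleftrightarrow>
     relax_feasible m n k a x w \<and> (\<forall>x' w'. relax_feasible m n k a x' w' \<longrightarrow> w' \<le> w)"

definition prob_contains :: "nat \<Rightarrow> nat \<Rightarrow> (nat \<Rightarrow> real) \<Rightarrow> nat set \<Rightarrow> real" where
  "prob_contains n k x T =
     (\<Sum>S\<in>{S. S \<subseteq> {1..n} \<and> card S = k \<and> T \<subseteq> S}. \<Prod>j\<in>S. x j) /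
     (\<Sum>S\<in>{S. S \<subseteq> {1..n} \<and> card S = k}. \<Prod>i\<in>S. x i)"

definition g_fun :: "nat \<Rightarrow> nat \<Rightarrow> nat \<Rightarrow> real" where
  "g_fun m n k = Sup ((\<lambda>y::real. \<Sum>\<tau>=0..m.
       real ((n - m) choose (k - \<tau>)) / (real (n - m) ^ (m - \<tau>) * real ((n - m) choose (k - m)))
       * (real (m choose \<tau>) / real m ^ \<tau>) * (real k - y) ^ (m - \<tau>) * y ^ \<tau>)
     ` {real m * real k / real n .. real m})"

end

theory Submission
  imports Defs
begin

(* Write e_j(A) for the j-th elementary symmetric polynomial of the weights x_i, i in A, and
   Z = [n] - T. Then Pr[T in S] = (prod_T x) e_{k-m}(Z) / e_k([n]) and
   e_k([n]) = sum_t e_t(T) e_{k-t}(Z). The weak form of Newton's inequalities,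
   e_{l+1}/C(N,l+1) <= (s/N) e_l/C(N,l) for N nonnegative weights with sum s, bounds e_t(T)
   and e_{k-t}(Z) in terms of y = sum_T x and k - y; this gives e_k([n]) <= G(y) e_{k-m}(Z),
   where G is the function maximised in g.
   It remains to show G(y) <= g(m,n,k) for y < mk/n: there G is nondecreasing. With
   p = y/m and q = (k-y)/(n-m) its derivative is sum_t kappa_t p^t q^(m-1-t), where the
   kappa_t change sign once, from + to -, and have nonnegative sum; this suffices because
   p <= q exactly when y <= mk/n. *)

section \<open>Elementary symmetric polynomials\<close>

definition esym :: "'a set \<Rightarrow> ('a \<Rightarrow> real) \<Rightarrow> nat \<Rightarrow> real" where
  "esym A x j = (\<Sum>S\<in>{S. S \<subseteq> A \<and> card S = j}. \<Prod>i\<in>S. x i)"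

lemma finite_subsets_card: "finite A \<Longrightarrow> finite {S. S \<subseteq> A \<and> card S = j}"
  by (rule finite_subset[of _ "Pow A"]) auto

lemma esym_0 [simp]: "finite A \<Longrightarrow> esym A x 0 = 1"
proof -
  assume "finite A"
  then have "{S. S \<subseteq> A \<and> card S = 0} = {{}}"
    by (auto dest: finite_subset)
  then show ?thesis by (simp add: esym_def)
qed

lemma esym_eq_0_if_card_less: "finite A \<Longrightarrow> card A < j \<Longrightarrow> esym A x j = 0"
  unfolding esym_def by (metis (mono_tags, lifting) card_mono leD mem_Collect_eq sum.neutral)

lemma esym_nonneg: "(\<And>i. i \<in> A \<Longrightarrow> 0 \<le> x i) \<Longrightarrow> 0 \<le> esym A x j"
  unfolding esym_def by (intro sum_nonneg prod_nonneg) auto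

lemma esym_insert:
  assumes "finite A" and "a \<notin> A"
  shows "esym (insert a A) x (Suc j) = esym A x (Suc j) + x a * esym A x j"
proof -
  let ?K = "\<lambda>B j. {S. S \<subseteq> B \<and> card S = j}"
  have split: "?K (insert a A) (Suc j) = ?K A (Suc j) \<union> insert a ` ?K A j"
  proof (intro equalityI subsetI)
    fix S assume S: "S \<in> ?K (insert a A) (Suc j)"
    then have "finite S" using assms(1) finite_subset by auto
    show "S \<in> ?K A (Suc j) \<union> insert a ` ?K A j"
    proof (cases "a \<in> S")
      case True
      then have "S = insert a (S - {a})" "S - {a} \<in> ?K A j"
        using S \<open>finite S\<close> by auto
      then show ?thesis by blast
    qed (use S in auto)
  next
    fix S assume "S \<in> ?K A (Suc j) \<union> insert a ` ?K A j"
    then show "S \<in> ?K (insert a A) (Suc j)"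
    proof
      assume "S \<in> insert a ` ?K A j"
      then obtain S0 where S0: "S = insert a S0" "S0 \<subseteq> A" "card S0 = j" by auto
      moreover have "finite S0" "a \<notin> S0" using S0 assms by (auto dest: finite_subset)
      ultimately show ?thesis by auto
    qed auto
  qed
  have disjoint: "?K A (Suc j) \<inter> insert a ` ?K A j = {}"
    using assms(2) by auto
  have inj: "inj_on (insert a) (?K A j)"
    using assms(2) by (intro inj_onI) (metis Diff_insert_absorb mem_Collect_eq subsetD)
  have "esym (insert a A) x (Suc j) = esym A x (Suc j) + (\<Sum>S\<in>?K A j. \<Prod>i\<in>insert a S. x i)"
    unfolding esym_def split using assms(1) disjoint inj
    by (simp add: sum.union_disjoint finite_subsets_card sum.reindex)
  also have "(\<Sum>S\<in>?K A j. \<Prod>i\<in>insert a S. x i) = (\<Sum>S\<in>?K A j. x a * (\<Prod>i\<in>S. x i))"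
  proof (intro sum.cong refl)
    fix S assume "S \<in> ?K A j"
    then have "finite S" "a \<notin> S" using assms by (auto dest: finite_subset)
    then show "(\<Prod>i\<in>insert a S. x i) = x a * (\<Prod>i\<in>S. x i)" by simp
  qed
  finally show ?thesis by (simp add: esym_def sum_distrib_left)
qed

lemma esym_remove:
  assumes "finite A" "i \<in> A"
  shows "esym A x (Suc r) = esym (A - {i}) x (Suc r) + x i * esym (A - {i}) x r"
  using esym_insert[of "A - {i}" i x r] assms by (simp add: insert_absorb)

lemma Suc_times_esym_Suc:
  assumes "finite A"
  shows "real (Suc r) * esym A x (Suc r) = (\<Sum>i\<in>A. x i * esym (A - {i}) x r)"
  using assms
proof (induction A arbitrary: r rule: finite_induct)
  case empty
  then show ?case by (simp add: esym_eq_0_if_card_less)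
next
  case (insert a A)
  have "insert a A - {i} = insert a (A - {i})" if "i \<in> A" for i
    using that insert.hyps by auto
  then have "(\<Sum>i\<in>insert a A. x i * esym (insert a A - {i}) x r) =
      x a * esym A x r + (\<Sum>i\<in>A. x i * esym (insert a (A - {i})) x r)"
    using insert.hyps by (simp add: insert_Diff_if)
  moreover have "(\<Sum>i\<in>A. x i * esym (insert a (A - {i})) x r) =
      real r * x a * esym A x r + real (Suc r) * esym A x (Suc r)"
  proof (cases r)
    case 0
    then show ?thesis using insert.IH[of 0] insert.hyps by simp
  next
    case (Suc r')
    have "(\<Sum>i\<in>A. x i * esym (insert a (A - {i})) x r) =
       (\<Sum>i\<in>A. x i * esym (A - {i}) x r) + x a * (\<Sum>i\<in>A. x i * esym (A - {i}) x r')"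
      using insert.hyps Suc by (simp add: esym_insert sum.distrib sum_distrib_left algebra_simps)
    then show ?thesis
      using insert.IH[of r] insert.IH[of r'] Suc by simp
  qed
  ultimately show ?case
    using insert.hyps esym_insert[of A a x r] by (simp add: algebra_simps)
qed

lemma esym_1: "finite A \<Longrightarrow> esym A x 1 = (\<Sum>i\<in>A. x i)"
  using Suc_times_esym_Suc[of A 0 x] by simp

lemma sum_esym_Diff_singleton:
  assumes "finite B"
  shows "(\<Sum>l\<in>B. esym (B - {l}) x r) = (real (card B) - real r) * esym B x r"
  using assms
proof (induction B arbitrary: r rule: finite_induct)
  case empty
  then show ?case by (cases r) (simp_all add: esym_eq_0_if_card_less)
next
  case (insert a B)
  have "insert a B - {l} = insert a (B - {l})" if "l \<in> B" for l
    using that insert.hyps by auto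
  then have "(\<Sum>l\<in>insert a B. esym (insert a B - {l}) x r) =
      esym B x r + (\<Sum>l\<in>B. esym (insert a (B - {l})) x r)"
    using insert.hyps by (simp add: insert_Diff_if)
  moreover have "(\<Sum>l\<in>B. esym (insert a (B - {l})) x r) =
      (real (card B) - real r) * esym B x r + (case r of 0 \<Rightarrow> 0
         | Suc r' \<Rightarrow> x a * ((real (card B) - real r') * esym B x r'))"
  proof (cases r)
    case (Suc r')
    then have "(\<Sum>l\<in>B. esym (insert a (B - {l})) x r) =
       (\<Sum>l\<in>B. esym (B - {l}) x r) + x a * (\<Sum>l\<in>B. esym (B - {l}) x r')"
      using insert.hyps by (simp add: esym_insert sum.distrib sum_distrib_left)
    then show ?thesis using insert.IH[of r] insert.IH[of r'] Suc by simp
  qed (use insert in simp)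
  ultimately show ?case
    using insert.hyps esym_insert[of B a x] by (cases r) (simp_all add: algebra_simps)
qed

lemma esym_Un_disjoint:
  assumes "finite A" "finite B" "A \<inter> B = {}"
  shows "esym (A \<union> B) x k = (\<Sum>t\<le>k. esym A x t * esym B x (k - t))"
  using assms
proof (induction A arbitrary: k rule: finite_induct)
  case empty
  have "(\<Sum>t\<le>k. esym {} x t * esym B x (k - t)) = (\<Sum>t\<in>{0}. esym {} x t * esym B x (k - t))"
    by (rule sum.mono_neutral_right) (auto simp: esym_eq_0_if_card_less)
  then show ?case by simp
next
  case (insert a A)
  have fin: "finite (A \<union> B)" and a: "a \<notin> A \<union> B" using insert by auto
  have IH: "esym (A \<union> B) x j = (\<Sum>t\<le>j. esym A x t * esym B x (j - t))" for j
    using insert by auto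
  show ?case
  proof (cases k)
    case (Suc k')
    have "esym (insert a A \<union> B) x k = esym (A \<union> B) x k + x a * esym (A \<union> B) x k'"
      using esym_insert[OF fin a] Suc by simp
    also have "\<dots> = esym A x 0 * esym B x k + (\<Sum>t\<le>k'. esym A x (Suc t) * esym B x (k' - t))
        + x a * (\<Sum>t\<le>k'. esym A x t * esym B x (k' - t))"
      unfolding IH Suc sum.atMost_Suc_shift by simp
    also have "\<dots> = (\<Sum>t\<le>k. esym (insert a A) x t * esym B x (k - t))"
      unfolding Suc sum.atMost_Suc_shift using insert.hyps
      by (simp add: esym_insert algebra_simps sum.distrib sum_distrib_left)
    finally show ?thesis .
  qed (use insert.hyps fin in simp)
qed

lemma sum_offdiag_swap:
  fixes g :: "'a \<Rightarrow> 'a \<Rightarrow> 'b::ab_group_add"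
  assumes "finite A"
  shows "(\<Sum>i\<in>A. \<Sum>l\<in>A - {i}. g i l) = (\<Sum>i\<in>A. \<Sum>l\<in>A - {i}. g l i)"
proof -
  have offdiag: "(\<Sum>i\<in>A. \<Sum>l\<in>A - {i}. h i l) = (\<Sum>i\<in>A. \<Sum>l\<in>A. h i l) - (\<Sum>i\<in>A. h i i)"
    for h :: "'a \<Rightarrow> 'a \<Rightarrow> 'b"
    using assms by (simp add: sum_diff1 sum_subtractf)
  show ?thesis
    unfolding offdiag by (subst sum.swap) simp
qed

lemma sum_offdiag_mult_le_sum_square:
  fixes x :: "'a \<Rightarrow> real"
  assumes "finite A" and "\<And>i l. w i l = w l i" and "\<And>i l. 0 \<le> w i l"
  shows "(\<Sum>i\<in>A. \<Sum>l\<in>A - {i}. x i * x l * w i l) \<le> (\<Sum>i\<in>A. \<Sum>l\<in>A - {i}. (x i)\<^sup>2 * w i l)"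
proof -
  have "2 * (\<Sum>i\<in>A. \<Sum>l\<in>A - {i}. x i * x l * w i l)
      \<le> (\<Sum>i\<in>A. \<Sum>l\<in>A - {i}. (x i)\<^sup>2 * w i l + (x l)\<^sup>2 * w l i)"
    unfolding sum_distrib_left
  proof (intro sum_mono)
    fix i l
    have "0 \<le> (x i - x l)\<^sup>2 * w i l" using assms(3) by simp
    then show "2 * (x i * x l * w i l) \<le> (x i)\<^sup>2 * w i l + (x l)\<^sup>2 * w l i"
      using assms(2)[of i l] by (simp add: power2_eq_square algebra_simps)
  qed
  also have "\<dots> = 2 * (\<Sum>i\<in>A. \<Sum>l\<in>A - {i}. (x i)\<^sup>2 * w i l)"
    using sum_offdiag_swap[OF assms(1), of "\<lambda>i l. (x l)\<^sup>2 * w l i"] by (simp add: sum.distrib)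
  finally show ?thesis by simp
qed

lemma sum_times_esym_Suc:
  assumes "finite A"
  shows "(\<Sum>i\<in>A. x i) * esym A x (Suc r) =
    (\<Sum>i\<in>A. x i * esym (A - {i}) x (Suc r)) + (\<Sum>i\<in>A. (x i)\<^sup>2 * esym (A - {i}) x r)"
proof -
  have "(\<Sum>i\<in>A. x i) * esym A x (Suc r) = (\<Sum>i\<in>A. x i * esym A x (Suc r))"
    by (simp add: sum_distrib_right)
  also have "\<dots> = (\<Sum>i\<in>A. x i * esym (A - {i}) x (Suc r) + (x i)\<^sup>2 * esym (A - {i}) x r)"
    using assms by (intro sum.cong refl) (simp add: esym_remove power2_eq_square algebra_simps)
  finally show ?thesis by (simp add: sum.distrib)
qed

lemma esym_Suc_Suc_eq_sum_pairs:
  assumes "finite A"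
  shows "real (Suc r) * (real (Suc (Suc r)) * esym A x (Suc (Suc r))) =
    (\<Sum>i\<in>A. \<Sum>l\<in>A - {i}. x i * x l * esym (A - {i} - {l}) x r)"
proof -
  have "real (Suc r) * (real (Suc (Suc r)) * esym A x (Suc (Suc r))) =
      (\<Sum>i\<in>A. x i * (real (Suc r) * esym (A - {i}) x (Suc r)))"
    unfolding Suc_times_esym_Suc[OF assms] sum_distrib_left by (simp only: mult_ac)
  also have "\<dots> = (\<Sum>i\<in>A. x i * (\<Sum>l\<in>A - {i}. x l * esym (A - {i} - {l}) x r))"
    using assms by (simp only: Suc_times_esym_Suc finite_Diff)
  finally show ?thesis by (simp add: sum_distrib_left mult_ac)
qed

lemma esym_weak_Newton:
  assumes "finite A" and "\<And>i. i \<in> A \<Longrightarrow> 0 \<le> x i"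
  shows "real (card A) * real (Suc (Suc r)) * esym A x (Suc (Suc r))
     \<le> (real (card A) - real r - 1) * (\<Sum>i\<in>A. x i) * esym A x (Suc r)"
proof -
  define P where "P = (\<Sum>i\<in>A. x i * esym (A - {i}) x (Suc r))"
  define Q where "Q = (\<Sum>i\<in>A. (x i)\<^sup>2 * esym (A - {i}) x r)"
  have P: "real (Suc (Suc r)) * esym A x (Suc (Suc r)) = P"
    unfolding P_def by (rule Suc_times_esym_Suc[OF assms(1)])
  have "real (Suc r) * P \<le> (\<Sum>i\<in>A. \<Sum>l\<in>A - {i}. (x i)\<^sup>2 * esym (A - {i} - {l}) x r)"
    unfolding P[symmetric] esym_Suc_Suc_eq_sum_pairs[OF assms(1)]
  proof (rule sum_offdiag_mult_le_sum_square[OF assms(1)])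
    show "esym (A - {i} - {l}) x r = esym (A - {l} - {i}) x r" for i l
      by (metis Diff_insert Diff_insert2)
    show "0 \<le> esym (A - {i} - {l}) x r" for i l
      using assms(2) by (intro esym_nonneg) auto
  qed
  also have "\<dots> = (\<Sum>i\<in>A. (x i)\<^sup>2 * ((real (card A) - 1 - real r) * esym (A - {i}) x r))"
  proof (intro sum.cong refl)
    fix i assume "i \<in> A"
    then have "real (card (A - {i})) = real (card A) - 1"
      using assms(1) card_gt_0_iff[of A] by auto
    then show "(\<Sum>l\<in>A - {i}. (x i)\<^sup>2 * esym (A - {i} - {l}) x r)
        = (x i)\<^sup>2 * ((real (card A) - 1 - real r) * esym (A - {i}) x r)"
      using sum_esym_Diff_singleton[of "A - {i}" x r] assms(1) by (simp add: sum_distrib_left[symmetric])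
  qed
  also have "\<dots> = (real (card A) - 1 - real r) * Q"
    unfolding Q_def sum_distrib_left by (simp only: mult_ac)
  finally have pairs: "real (Suc r) * P \<le> (real (card A) - 1 - real r) * Q" .
  have PQ: "(\<Sum>i\<in>A. x i) * esym A x (Suc r) = P + Q"
    unfolding P_def Q_def by (rule sum_times_esym_Suc[OF assms(1)])
  have "real (card A) * real (Suc (Suc r)) * esym A x (Suc (Suc r))
      = (real (card A) - real r - 1) * P + real (Suc r) * P"
    unfolding mult.assoc P by (simp add: algebra_simps)
  also have "\<dots> \<le> (real (card A) - real r - 1) * P + (real (card A) - 1 - real r) * Q"
    using pairs by simp
  also have "\<dots> = (real (card A) - real r - 1) * (\<Sum>i\<in>A. x i) * esym A x (Suc r)"
    unfolding mult.assoc PQ by (simp add: algebra_simps)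
  finally show ?thesis .
qed

lemma binomial_Suc_absorb: "Suc k * (n choose Suc k) = (n - k) * (n choose k)"
  by (metis binomial_absorb_comp binomial_absorption)

lemma esym_normalized_Suc_le:
  assumes "finite A" and nonneg: "\<And>i. i \<in> A \<Longrightarrow> 0 \<le> x i" and "Suc l \<le> card A"
  shows "esym A x (Suc l) / real (card A choose Suc l)
     \<le> ((\<Sum>i\<in>A. x i) / real (card A)) * (esym A x l / real (card A choose l))"
proof -
  define N where "N = card A"
  define s where "s = (\<Sum>i\<in>A. x i)"
  have N: "0 < real N" "0 < real N - real l" and C: "0 < real (N choose l)"
    using assms(3) by (auto simp: N_def)
  have key: "real N * real (Suc l) * esym A x (Suc l) \<le> (real N - real l) * s * esym A x l"
  proof (cases l)
    case 0
    then show ?thesis using esym_1[OF assms(1), of x] assms(1) by (simp add: s_def N_def)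
  next
    case (Suc r)
    then show ?thesis using esym_weak_Newton[of A x r] assms(1) nonneg
      by (simp add: N_def s_def algebra_simps)
  qed
  have binom: "real (Suc l) * real (N choose Suc l) = (real N - real l) * real (N choose l)"
    using binomial_Suc_absorb[of l N] assms(3) unfolding N_def
    by (metis of_nat_diff of_nat_mult less_imp_le_nat Suc_le_lessD)
  have "esym A x (Suc l) / real (N choose Suc l)
      = real N * real (Suc l) * esym A x (Suc l) / (real N * ((real N - real l) * real (N choose l)))"
    using N by (simp flip: binom)
  also have "\<dots> \<le> (real N - real l) * s * esym A x l / (real N * ((real N - real l) * real (N choose l)))"
    using key N C by (intro divide_right_mono) auto
  also have "\<dots> = (s / real N) * (esym A x l / real (N choose l))"
    using N by simp
  finally show ?thesis unfolding N_def s_def .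
qed

lemma esym_normalized_le_power:
  assumes "finite A" and nonneg: "\<And>i. i \<in> A \<Longrightarrow> 0 \<le> x i" and "j \<le> l" "l \<le> card A"
  shows "esym A x l / real (card A choose l)
     \<le> ((\<Sum>i\<in>A. x i) / real (card A)) ^ (l - j) * (esym A x j / real (card A choose j))"
  using assms(3,4)
proof (induction l rule: dec_induct)
  case (step l)
  let ?r = "(\<Sum>i\<in>A. x i) / real (card A)"
  have r: "0 \<le> ?r" using nonneg by (simp add: sum_nonneg)
  have "esym A x (Suc l) / real (card A choose Suc l) \<le> ?r * (esym A x l / real (card A choose l))"
    using esym_normalized_Suc_le[OF assms(1) nonneg step.prems] .
  also have "\<dots> \<le> ?r * (?r ^ (l - j) * (esym A x j / real (card A choose j)))"
    using step.IH step.prems r by (intro mult_left_mono) auto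
  also have "\<dots> = ?r ^ (Suc l - j) * (esym A x j / real (card A choose j))"
    using step.hyps by (simp add: Suc_diff_le)
  finally show ?case .
qed simp

lemma esym_le_scaled:
  assumes "finite A" and nonneg: "\<And>i. i \<in> A \<Longrightarrow> 0 \<le> x i" and "j \<le> l" "j \<le> card A"
  shows "esym A x l \<le> real (card A choose l) / (real (card A) ^ (l - j) * real (card A choose j))
    * (\<Sum>i\<in>A. x i) ^ (l - j) * esym A x j"
proof (cases "l \<le> card A")
  case True
  have "0 < real (card A choose l)" "0 < real (card A choose j)"
    using True assms(4) by auto
  then show ?thesis
    using esym_normalized_le_power[of A x j l] assms True
    by (simp add: divide_le_eq field_simps)
next
  case False
  then show ?thesis
    using assms by (simp add: esym_eq_0_if_card_less esym_nonneg sum_nonneg)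
qed

lemma esym_pos:
  assumes "finite A" and "\<And>i. i \<in> A \<Longrightarrow> 0 \<le> x i \<and> x i \<le> 1" and "(\<Sum>i\<in>A. x i) = real k"
  shows "0 < esym A x k"
proof -
  define P where "P = {i\<in>A. 0 < x i}"
  have "real k = (\<Sum>i\<in>P. x i)"
    unfolding assms(3)[symmetric] P_def using assms(1,2)
    by (intro sum.mono_neutral_right) (auto simp: less_le)
  also have "\<dots> \<le> real (card P)"
    using assms(2) sum_mono[of P x "\<lambda>_. 1"] unfolding P_def by auto
  finally obtain S where S: "S \<subseteq> P" "card S = k"
    by (meson obtain_subset_with_card_n of_nat_le_iff)
  have "0 < (\<Prod>i\<in>S. x i)"
    using S unfolding P_def by (intro prod_pos) auto
  also have "\<dots> \<le> esym A x k"
    unfolding esym_def using S assms(1,2) unfolding P_def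
    by (intro member_le_sum) (auto intro!: prod_nonneg finite_subsets_card)
  finally show ?thesis .
qed

lemma sum_prod_supersets:
  assumes "finite U" "T \<subseteq> U" "card T \<le> k"
  shows "(\<Sum>S\<in>{S. S \<subseteq> U \<and> card S = k \<and> T \<subseteq> S}. \<Prod>j\<in>S. x j)
    = (\<Prod>i\<in>T. x i) * esym (U - T) x (k - card T)"
proof -
  have fT: "finite T" using assms finite_subset by blast
  have "(\<Sum>S\<in>{S. S \<subseteq> U \<and> card S = k \<and> T \<subseteq> S}. \<Prod>j\<in>S. x j)
      = (\<Sum>S\<in>{S. S \<subseteq> U - T \<and> card S = k - card T}. \<Prod>j\<in>T \<union> S. x j)"
  proof (rule sum.reindex_bij_witness[where i = "\<lambda>S. T \<union> S" and j = "\<lambda>S. S - T"])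
    fix S assume S: "S \<in> {S. S \<subseteq> U \<and> card S = k \<and> T \<subseteq> S}"
    then have "finite S" using assms(1) finite_subset by auto
    with S fT show "T \<union> (S - T) = S" "S - T \<in> {S. S \<subseteq> U - T \<and> card S = k - card T}"
      "(\<Prod>j\<in>T \<union> (S - T). x j) = (\<Prod>j\<in>S. x j)"
      by (auto simp: card_Diff_subset Un_absorb1)
  next
    fix S assume S: "S \<in> {S. S \<subseteq> U - T \<and> card S = k - card T}"
    then have "finite S" using assms(1) finite_subset by auto
    then have "card (T \<union> S) = card T + card S" using fT S by (intro card_Un_disjoint) auto
    with S assms show "T \<union> S - T = S" "T \<union> S \<in> {S. S \<subseteq> U \<and> card S = k \<and> T \<subseteq> S}"
      by (auto simp: card_Un_disjoint)
  qed
  also have "\<dots> = (\<Sum>S\<in>{S. S \<subseteq> U - T \<and> card S = k - card T}. (\<Prod>i\<in>T. x i) * (\<Prod>j\<in>S. x j))"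
    using fT assms(1) by (intro sum.cong refl prod.union_disjoint) (auto dest: finite_subset)
  finally show ?thesis by (simp add: esym_def sum_distrib_left)
qed

section \<open>Monotonicity of the objective below mk/n\<close>

lemma vandermonde_atMost:
  assumes "a \<le> r"
  shows "(\<Sum>t\<le>a. (a choose t) * (N choose (r - t))) = (a + N) choose r"
proof -
  have "(\<Sum>t\<le>a. (a choose t) * (N choose (r - t))) = (\<Sum>t\<le>r. (a choose t) * (N choose (r - t)))"
    using assms by (intro sum.mono_neutral_left) auto
  then show ?thesis by (simp add: vandermonde)
qed

lemma sum_Suc_times_binomial_vandermonde:
  assumes "a \<le> r"
  shows "(\<Sum>t<Suc a. Suc t * (Suc a choose Suc t) * (N choose (Suc r - Suc t)))
    = Suc a * ((a + N) choose r)"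
proof -
  have "(\<Sum>t<Suc a. Suc t * (Suc a choose Suc t) * (N choose (Suc r - Suc t)))
      = (\<Sum>t\<le>a. Suc a * ((a choose t) * (N choose (r - t))))"
    unfolding lessThan_Suc_atMost
    by (intro sum.cong refl) (metis binomial_absorption diff_Suc_1 diff_Suc_Suc mult.assoc)
  also have "\<dots> = Suc a * ((a + N) choose r)"
    using assms by (simp only: sum_distrib_left[symmetric] vandermonde_atMost)
  finally show ?thesis .
qed

lemma sum_diff_times_binomial_vandermonde:
  assumes "a \<le> r"
  shows "(\<Sum>t<Suc a. (Suc a - t) * (Suc a choose t) * (N choose (r - t))) = Suc a * ((a + N) choose r)"
proof -
  have "(\<Sum>t<Suc a. (Suc a - t) * (Suc a choose t) * (N choose (r - t)))
      = (\<Sum>t\<le>a. Suc a * ((a choose t) * (N choose (r - t))))"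
    unfolding lessThan_Suc_atMost
    by (intro sum.cong refl) (metis binomial_absorb_comp diff_Suc_1 mult.assoc)
  also have "\<dots> = Suc a * ((a + N) choose r)"
    using assms by (simp only: sum_distrib_left[symmetric] vandermonde_atMost)
  finally show ?thesis .
qed

lemma sum_sign_change_nonneg:
  fixes \<kappa> :: "nat \<Rightarrow> real"
  assumes "\<And>t. t < M \<Longrightarrow> t < c \<Longrightarrow> 0 \<le> \<kappa> t" and "\<And>t. t < M \<Longrightarrow> c \<le> t \<Longrightarrow> \<kappa> t \<le> 0"
    and "0 \<le> r" "r \<le> 1" and "0 \<le> (\<Sum>t<M. \<kappa> t)"
  shows "0 \<le> (\<Sum>t<M. \<kappa> t * r ^ t)"
proof -
  have "0 \<le> (\<Sum>t<M. \<kappa> t) * r ^ c" using assms(3,5) by simp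
  also have "\<dots> = (\<Sum>t<M. \<kappa> t * r ^ c)" by (simp add: sum_distrib_right)
  also have "\<dots> \<le> (\<Sum>t<M. \<kappa> t * r ^ t)"
  proof (intro sum_mono)
    fix t assume "t \<in> {..<M}"
    show "\<kappa> t * r ^ c \<le> \<kappa> t * r ^ t"
    proof (cases "t < c")
      case True
      then show ?thesis
        using assms(1,3,4) \<open>t \<in> {..<M}\<close> by (auto intro!: mult_left_mono power_decreasing)
    next
      case False
      then show ?thesis
        using assms(2,3,4) \<open>t \<in> {..<M}\<close> by (auto intro!: mult_left_mono_neg power_decreasing)
    qed
  qed
  finally show ?thesis .
qed

lemma has_real_derivative_power_mult_power:
  fixes c a b k :: real and t M :: nat
  shows "((\<lambda>y. c * (y / a) ^ t * ((k - y) / b) ^ (M - t)) has_real_derivative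
      c * (real t / a * (y / a) ^ (t - 1) * ((k - y) / b) ^ (M - t)
         - real (M - t) / b * (y / a) ^ t * ((k - y) / b) ^ (M - t - 1))) (at y)"
proof -
  have "((\<lambda>y. c * ((y / a) ^ t * ((k - y) / b) ^ (M - t))) has_real_derivative
      c * (real t * (1 / a * (y / a) ^ (t - Suc 0)) * ((k - y) / b) ^ (M - t)
        + real (M - t) * ((0 - 1) / b * ((k - y) / b) ^ (M - t - Suc 0)) * (y / a) ^ t)) (at y)"
    by (intro DERIV_cmult DERIV_mult DERIV_power DERIV_cdivide DERIV_diff DERIV_const DERIV_ident)
  then show ?thesis
    by (simp add: mult.assoc) (simp add: algebra_simps)
qed

locale objective_params =
  fixes m n k :: nat
  assumes m_pos: "1 \<le> m" and m_le_k: "m \<le> k" and k_le_n: "k \<le> n" and m_less_n: "m < n"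
begin

definition "N = n - m"
definition "weight t = real (m choose t) * real (N choose (k - t))"
definition "phi y = (\<Sum>t\<le>m. weight t * (y / real m) ^ t * ((real k - y) / real N) ^ (m - t))"
definition "dphi y = (\<Sum>t\<le>m. weight t * (real t / real m * (y / real m) ^ (t - 1) * ((real k - y) / real N) ^ (m - t)
         - real (m - t) / real N * (y / real m) ^ t * ((real k - y) / real N) ^ (m - t - 1)))"
definition "kappa t = real (Suc t) * weight (Suc t) / real m - real (m - t) * weight t / real N"
definition "sigma t = real N * real (k - t) - real m * (real N - real (k - t) + 1)"

lemma N_pos: "0 < N"
  using m_less_n by (simp add: N_def)

lemma phi_has_derivative: "(phi has_real_derivative dphi y) (at y)"
  unfolding phi_def[abs_def] dphi_def
  by (intro DERIV_sum has_real_derivative_power_mult_power)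

lemma dphi_eq: "dphi y = (\<Sum>t<m. kappa t * (y / real m) ^ t * ((real k - y) / real N) ^ (m - 1 - t))"
proof -
  obtain m' where m': "m = Suc m'" using m_pos by (cases m) auto
  define p where "p = y / real m"
  define q where "q = (real k - y) / real N"
  have up: "(\<Sum>t\<le>m. weight t * (real t / real m * p ^ (t - 1) * q ^ (m - t)))
      = (\<Sum>t\<le>m'. real (Suc t) * weight (Suc t) / real m * p ^ t * q ^ (m' - t))"
    unfolding m' sum.atMost_Suc_shift by (simp add: algebra_simps)
  have down: "(\<Sum>t\<le>m. weight t * (real (m - t) / real N * p ^ t * q ^ (m - t - 1)))
      = (\<Sum>t\<le>m'. real (m - t) * weight t / real N * p ^ t * q ^ (m' - t))"
    unfolding m' sum.atMost_Suc by (simp add: m' algebra_simps)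
  have "dphi y = (\<Sum>t\<le>m. weight t * (real t / real m * p ^ (t - 1) * q ^ (m - t)))
       - (\<Sum>t\<le>m. weight t * (real (m - t) / real N * p ^ t * q ^ (m - t - 1)))"
    unfolding dphi_def p_def q_def by (simp add: sum_subtractf right_diff_distrib mult.assoc)
  also have "\<dots> = (\<Sum>t\<le>m'. kappa t * p ^ t * q ^ (m' - t))"
    unfolding up down kappa_def by (simp add: sum_subtractf left_diff_distrib)
  also have "\<dots> = (\<Sum>t<m. kappa t * p ^ t * q ^ (m - 1 - t))"
    using m' by (simp add: lessThan_Suc_atMost)
  finally show ?thesis unfolding p_def q_def .
qed

lemma kappa_times_eq_sigma:
  assumes "t < m"
  shows "kappa t * (real m * real N * real (k - t)) =
     real (m - t) * real (m choose t) * real (N choose (k - t - 1)) * sigma t"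
proof -
  obtain i where i: "k - t = Suc i" using assms m_le_k by (metis Suc_diff_Suc order_less_le_trans)
  have b1: "real (Suc t) * real (m choose Suc t) = real (m - t) * real (m choose t)"
    using binomial_Suc_absorb[of t m] by (metis of_nat_mult)
  have b2: "real (Suc i) * real (N choose Suc i) = real (N - i) * real (N choose i)"
    using binomial_Suc_absorb[of i N] by (metis of_nat_mult)
  have "real (Suc t) * weight (Suc t) = real (m - t) * real (m choose t) * real (N choose i)"
  proof -
    have "k - Suc t = i" using i by simp
    then show ?thesis unfolding weight_def using b1 by (simp flip: mult.assoc)
  qed
  moreover have "real (m - t) * weight t = real (m - t) * real (m choose t) * real (N choose Suc i)"
    unfolding weight_def i by (simp add: mult.assoc)
  ultimately have kappa: "kappa t = real (m - t) * real (m choose t)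
      * (real (N choose i) / real m - real (N choose Suc i) / real N)"
    unfolding kappa_def by (simp add: right_diff_distrib)
  have "kappa t * (real m * real N * real (Suc i)) = real (m - t) * real (m choose t)
      * (real N * real (Suc i) * real (N choose i) - real m * (real (Suc i) * real (N choose Suc i)))"
    unfolding kappa using m_pos N_pos by (simp add: field_simps)
  also have "\<dots> = real (m - t) * real (m choose t) * real (N choose i) * (real N * real (Suc i) - real m * real (N - i))"
    unfolding b2 by (simp add: algebra_simps)
  also have "\<dots> = real (m - t) * real (m choose t) * real (N choose i) * sigma t"
    unfolding sigma_def i by (cases "i \<le> N") simp_all
  finally show ?thesis using i by simp
qed

lemma sigma_antimono:
  assumes "t \<le> t'"
  shows "sigma t' \<le> sigma t"
proof -
  have "(real N + real m) * real (k - t') \<le> (real N + real m) * real (k - t)"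
    using assms by (intro mult_left_mono) auto
  then show ?thesis
    unfolding sigma_def by (simp add: algebra_simps)
qed

lemma kappa_sign:
  assumes "t < m"
  shows "0 \<le> sigma t \<Longrightarrow> 0 \<le> kappa t" and "sigma t \<le> 0 \<Longrightarrow> kappa t \<le> 0"
proof -
  define d where "d = real m * real N * real (k - t)"
  define X where "X = real (m - t) * real (m choose t) * real (N choose (k - t - 1))"
  have "0 < d" "0 \<le> X"
    unfolding d_def X_def using assms m_le_k N_pos by simp_all
  moreover have "kappa t * d = X * sigma t"
    unfolding d_def X_def by (rule kappa_times_eq_sigma[OF assms])
  then have "kappa t = X * sigma t / d"
    using \<open>0 < d\<close> by (simp add: eq_divide_eq)
  ultimately show "0 \<le> sigma t \<Longrightarrow> 0 \<le> kappa t" and "sigma t \<le> 0 \<Longrightarrow> kappa t \<le> 0"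
    by (simp_all add: mult_nonneg_nonpos divide_nonpos_pos)
qed

lemma sum_kappa_nonneg: "0 \<le> (\<Sum>t<m. kappa t)"
proof -
  obtain m' where m': "m = Suc m'" using m_pos by (cases m) auto
  obtain k' where k': "k = Suc k'" using m_pos m_le_k by (cases k) auto
  have "m' \<le> k'" "m' \<le> k" using m' k' m_le_k by simp_all
  have "(\<Sum>t<m. real (Suc t) * weight (Suc t))
      = real (\<Sum>t<m. Suc t * (m choose Suc t) * (N choose (k - Suc t)))"
    unfolding weight_def by (simp only: of_nat_sum of_nat_mult mult.assoc)
  also have "\<dots> = real m * real ((m' + N) choose k')"
    unfolding sum_Suc_times_binomial_vandermonde[OF \<open>m' \<le> k'\<close>, of N, folded m' k'] by simp
  finally have up: "(\<Sum>t<m. real (Suc t) * weight (Suc t) / real m) = real ((m' + N) choose k')"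
    using m_pos by (simp flip: sum_divide_distrib)
  have "(\<Sum>t<m. real (m - t) * weight t)
      = real (\<Sum>t<m. (m - t) * (m choose t) * (N choose (k - t)))"
    unfolding weight_def by (simp only: of_nat_sum of_nat_mult mult.assoc)
  also have "\<dots> = real m * real ((m' + N) choose k)"
    unfolding sum_diff_times_binomial_vandermonde[OF \<open>m' \<le> k\<close>, of N, folded m'] by simp
  finally have down: "(\<Sum>t<m. real (m - t) * weight t / real N) = real m * real ((m' + N) choose k) / real N"
    by (simp flip: sum_divide_distrib)
  have absorb: "real k * real ((m' + N) choose k) = (real n - real k) * real ((m' + N) choose k')"
  proof -
    have "m' + N - k' = n - k" unfolding N_def using m' k' m_less_n k_le_n by simp
    then have "k * ((m' + N) choose k) = (n - k) * ((m' + N) choose k')"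
      using binomial_Suc_absorb[of k' "m' + N", folded k'] by simp
    then show ?thesis
      using k_le_n by (simp flip: of_nat_mult of_nat_diff)
  qed
  have "real m * (real n - real k) \<le> real k * real N"
    using m_le_k m_less_n k_le_n by (simp add: N_def algebra_simps mult_right_mono)
  then have "real m * (real k * real ((m' + N) choose k)) \<le> real k * (real N * real ((m' + N) choose k'))"
    unfolding absorb by (simp add: mult_right_mono flip: mult.assoc)
  then have "real m * real ((m' + N) choose k) \<le> real N * real ((m' + N) choose k')"
    using m_pos m_le_k by (simp add: mult.left_commute[of "real m"])
  then have "real m * real ((m' + N) choose k) / real N \<le> real ((m' + N) choose k')"
    using m_pos m_le_k N_pos by (simp add: divide_le_eq mult.commute)
  then show ?thesis unfolding kappa_def sum_subtractf up down by simp
qed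

lemma dphi_nonneg:
  assumes "0 \<le> y" and "y \<le> real m * real k / real n"
  shows "0 \<le> dphi y"
proof -
  define p where "p = y / real m"
  define q where "q = (real k - y) / real N"
  have yn: "y * real n \<le> real m * real k"
    using assms(2) m_less_n by (simp add: le_divide_eq)
  have "real m * real k < real n * real k"
    using m_less_n m_le_k m_pos by simp
  with yn have "y * real n < real k * real n"
    by (simp add: mult.commute)
  then have "y < real k"
    using m_less_n by (simp add: mult_less_cancel_right)
  then have "0 < q" unfolding q_def using N_pos by simp
  have "y * real N \<le> real m * (real k - y)"
    using yn m_less_n by (simp add: N_def algebra_simps)
  then have "p \<le> q"
    unfolding p_def q_def using m_pos N_pos by (simp add: field_simps)
  have "0 \<le> p" unfolding p_def using assms(1) by simp
  define r where "r = p / q"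
  have r: "0 \<le> r" "r \<le> 1" "p = r * q"
    unfolding r_def using \<open>0 \<le> p\<close> \<open>0 < q\<close> \<open>p \<le> q\<close> by auto
  have "dphi y = (\<Sum>t<m. q ^ (m - 1) * (kappa t * r ^ t))"
    unfolding dphi_eq p_def[symmetric] q_def[symmetric] r(3) power_mult_distrib
  proof (intro sum.cong refl)
    fix t assume "t \<in> {..<m}"
    then have "q ^ (m - 1) = q ^ t * q ^ (m - 1 - t)" by (simp flip: power_add)
    then show "kappa t * (r ^ t * q ^ t) * q ^ (m - 1 - t) = q ^ (m - 1) * (kappa t * r ^ t)"
      by (simp only: mult_ac)
  qed
  moreover have "0 \<le> (\<Sum>t<m. kappa t * r ^ t)"
  proof (rule sum_sign_change_nonneg[where c = "LEAST t. sigma t < 0"])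
    have "sigma k < 0" unfolding sigma_def using m_pos by simp
    then have neg: "sigma (LEAST t. sigma t < 0) < 0" by (rule LeastI)
    show "0 \<le> kappa t" if "t < m" "t < (LEAST t. sigma t < 0)" for t
      using kappa_sign(1)[OF that(1)] not_less_Least[OF that(2)] by simp
    show "kappa t \<le> 0" if "t < m" "(LEAST t. sigma t < 0) \<le> t" for t
      using kappa_sign(2)[OF that(1)] sigma_antimono[OF that(2)] neg by simp
  qed (use r sum_kappa_nonneg in auto)
  ultimately show ?thesis
    using \<open>0 < q\<close> by (simp add: sum_distrib_left[symmetric])
qed

lemma phi_mono:
  assumes "0 \<le> y1" "y1 \<le> y2" "y2 \<le> real m * real k / real n"
  shows "phi y1 \<le> phi y2"
proof (rule DERIV_nonneg_imp_increasing_open[OF assms(2)])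
  show "\<exists>d. (phi has_real_derivative d) (at y) \<and> 0 \<le> d" if "y1 < y" "y < y2" for y
    using phi_has_derivative[of y] dphi_nonneg[of y] that assms by auto
  show "continuous_on {y1..y2} phi"
    by (intro continuous_at_imp_continuous_on ballI DERIV_isCont[OF phi_has_derivative])
qed

end

section \<open>The bound on the inclusion probability\<close>

definition g_objective :: "nat \<Rightarrow> nat \<Rightarrow> nat \<Rightarrow> real \<Rightarrow> real" where
  "g_objective m n k y = (\<Sum>\<tau>=0..m.
       real ((n - m) choose (k - \<tau>)) / (real (n - m) ^ (m - \<tau>) * real ((n - m) choose (k - m)))
       * (real (m choose \<tau>) / real m ^ \<tau>) * (real k - y) ^ (m - \<tau>) * y ^ \<tau>)"

lemma g_fun_eq_Sup: "g_fun m n k = Sup (g_objective m n k ` {real m * real k / real n .. real m})"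
  unfolding g_fun_def g_objective_def ..

lemma (in objective_params) g_objective_eq_phi: "g_objective m n k y = phi y / real (N choose (k - m))"
proof -
  have "0 < real m" "0 < real N" "0 < real (N choose (k - m))"
    using m_pos N_pos k_le_n m_le_k by (auto simp: N_def)
  then show ?thesis
    unfolding g_objective_def phi_def N_def[symmetric] atLeast0AtMost sum_divide_distrib
    by (intro sum.cong refl) (simp add: weight_def field_simps)
qed

lemma (in objective_params) g_objective_mono:
  assumes "0 \<le> y1" "y1 \<le> y2" "y2 \<le> real m * real k / real n"
  shows "g_objective m n k y1 \<le> g_objective m n k y2"
  unfolding g_objective_eq_phi using phi_mono[OF assms] by (simp add: divide_right_mono)

lemma g_objective_le_g_fun:
  assumes "1 \<le> m" "m \<le> k" "k \<le> n" and "0 \<le> y" "y \<le> real m"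
    and "m < n \<or> real m * real k / real n \<le> y"
  shows "g_objective m n k y \<le> g_fun m n k"
proof -
  let ?I = "{real m * real k / real n .. real m}"
  have le_g: "g_objective m n k z \<le> g_fun m n k" if "z \<in> ?I" for z
  proof -
    have "continuous_on ?I (g_objective m n k)"
      unfolding g_objective_def by (intro continuous_intros)
    then obtain z' where "\<forall>v\<in>?I. g_objective m n k v \<le> g_objective m n k z'"
      using continuous_attains_sup[of ?I] that by fastforce
    then have "bdd_above (g_objective m n k ` ?I)"
      by (auto intro: bdd_aboveI2)
    then show ?thesis
      unfolding g_fun_eq_Sup using that by (intro cSup_upper) auto
  qed
  show ?thesis
  proof (cases "real m * real k / real n \<le> y")
    case True
    then show ?thesis using assms(5) le_g by simp
  next
    case False
    then interpret objective_params m n k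
      using assms by unfold_locales auto
    have "g_objective m n k y \<le> g_objective m n k (real m * real k / real n)"
      using False assms(4) by (intro g_objective_mono) auto
    also have "\<dots> \<le> g_fun m n k"
      using assms(1,3) by (intro le_g) (simp add: divide_le_eq mult_left_mono)
    finally show ?thesis .
  qed
qed

lemma esym_Un_le_g_objective:
  fixes x :: "'a \<Rightarrow> real"
  assumes "finite T" "finite Z" "T \<inter> Z = {}" "card T = m" "card Z = n - m" "m \<le> k" "k \<le> n"
    and nonneg: "\<And>i. i \<in> T \<union> Z \<Longrightarrow> 0 \<le> x i" and sum_k: "(\<Sum>i\<in>T \<union> Z. x i) = real k"
  shows "esym (T \<union> Z) x k \<le> g_objective m n k (\<Sum>i\<in>T. x i) * esym Z x (k - m)"
proof -
  define y where "y = (\<Sum>i\<in>T. x i)"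
  have sum_Z: "(\<Sum>i\<in>Z. x i) = real k - y"
    using sum_k assms(1-3) unfolding y_def by (simp add: sum.union_disjoint)
  have "esym (T \<union> Z) x k = (\<Sum>t\<le>m. esym T x t * esym Z x (k - t))"
    unfolding esym_Un_disjoint[OF assms(1-3)]
    using assms(1,4,6) by (intro sum.mono_neutral_right) (auto simp: esym_eq_0_if_card_less)
  also have "\<dots> \<le> (\<Sum>t\<le>m. (real (m choose t) / real m ^ t * y ^ t) *
      (real ((n - m) choose (k - t)) / (real (n - m) ^ (m - t) * real ((n - m) choose (k - m)))
        * (real k - y) ^ (m - t) * esym Z x (k - m)))"
  proof (intro sum_mono mult_mono)
    fix t assume "t \<in> {..m}"
    then show "esym T x t \<le> real (m choose t) / real m ^ t * y ^ t"
      using esym_le_scaled[of T x 0 t] assms(1,4) nonneg unfolding y_def by simp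
    have "(k - t) - (k - m) = m - t" using \<open>t \<in> {..m}\<close> assms(6) by simp
    then show "esym Z x (k - t) \<le> real ((n - m) choose (k - t)) / (real (n - m) ^ (m - t)
        * real ((n - m) choose (k - m))) * (real k - y) ^ (m - t) * esym Z x (k - m)"
      using esym_le_scaled[of Z x "k - m" "k - t"] \<open>t \<in> {..m}\<close> assms(2,5-7) nonneg sum_Z
      by simp
    show "0 \<le> real (m choose t) / real m ^ t * y ^ t"
      unfolding y_def using nonneg by (simp add: sum_nonneg)
    show "0 \<le> esym Z x (k - t)"
      using nonneg by (intro esym_nonneg) auto
  qed
  also have "\<dots> = g_objective m n k y * esym Z x (k - m)"
    unfolding g_objective_def atLeast0AtMost sum_distrib_right
    by (intro sum.cong refl) (simp only: mult_ac)
  finally show ?thesis unfolding y_def .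
qed

lemma prob_contains_eq_esym:
  assumes "T \<subseteq> {1..n}" "card T \<le> k"
  shows "prob_contains n k x T = (\<Prod>i\<in>T. x i) * esym ({1..n} - T) x (k - card T) / esym {1..n} x k"
  unfolding prob_contains_def using sum_prod_supersets[of "{1..n}" T k x] assms
  by (simp add: esym_def)

lemma esym_le_g_fun_mult:
  assumes "1 \<le> m" "m \<le> k" "k \<le> n" "T \<subseteq> {1..n}" "card T = m"
    and x01: "\<And>i. i \<in> {1..n} \<Longrightarrow> 0 \<le> x i \<and> x i \<le> 1" and sum_k: "(\<Sum>i\<in>{1..n}. x i) = real k"
  shows "esym {1..n} x k \<le> g_fun m n k * esym ({1..n} - T) x (k - m)"
proof -
  define Z where "Z = {1..n} - T"
  have U: "{1..n} = T \<union> Z" "T \<inter> Z = {}" "finite T" "finite Z" "card Z = n - m"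
    unfolding Z_def using assms(4,5) finite_subset[OF assms(4)] by (auto simp: card_Diff_subset)
  have "m < n \<or> real m * real k / real n \<le> (\<Sum>i\<in>T. x i)"
  proof (cases "m < n")
    case False
    then have "Z = {}" "k = n" "n = m" using U(4,5) assms(2,3) by auto
    then show ?thesis using sum_k U(1) assms(1) by simp
  qed simp
  moreover have "0 \<le> (\<Sum>i\<in>T. x i)"
    using x01 assms(4) by (intro sum_nonneg) auto
  moreover have "(\<Sum>i\<in>T. x i) \<le> (\<Sum>i\<in>T. 1)"
    using x01 assms(4) by (intro sum_mono) auto
  ultimately have "g_objective m n k (\<Sum>i\<in>T. x i) \<le> g_fun m n k"
    using assms(1-3,5) by (intro g_objective_le_g_fun) auto
  moreover have "esym {1..n} x k \<le> g_objective m n k (\<Sum>i\<in>T. x i) * esym Z x (k - m)"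
    unfolding U(1) using U assms(2,3,5) x01 sum_k by (intro esym_Un_le_g_objective) (auto simp flip: U(1))
  moreover have "0 \<le> esym Z x (k - m)"
    using x01 unfolding Z_def by (intro esym_nonneg) auto
  ultimately show ?thesis
    unfolding Z_def by (meson mult_right_mono order_trans)
qed

theorem proposition1:
  fixes m n k :: nat and a :: "nat \<Rightarrow> real Matrix.vec" and xh :: "nat \<Rightarrow> real" and wh :: real
  assumes "1 \<le> m" and "m \<le> k" and "k \<le> n"
    and "\<forall>i\<in>{1..n}. dim_vec (a i) = m"
    and "relax_optimal m n k a xh wh"
    and "T \<subseteq> {1..n}" and "card T = m"
  shows "prob_contains n k xh T \<ge> (1 / g_fun m n k) * (\<Prod>i\<in>T. xh i)"
proof -
  have x01: "\<And>i. i \<in> {1..n} \<Longrightarrow> 0 \<le> xh i \<and> xh i \<le> 1" and sum_k: "(\<Sum>i\<in>{1..n}. xh i) = real k"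
    using assms(5) unfolding relax_optimal_def relax_feasible_def by auto
  have prob: "prob_contains n k xh T
      = (\<Prod>i\<in>T. xh i) * esym ({1..n} - T) xh (k - m) / esym {1..n} xh k"
    using prob_contains_eq_esym[of T n k xh] assms(2,6,7) by simp
  have pos: "0 < esym {1..n} xh k"
    using esym_pos x01 sum_k by blast
  have le: "esym {1..n} xh k \<le> g_fun m n k * esym ({1..n} - T) xh (k - m)"
    using esym_le_g_fun_mult[OF assms(1-3,6,7) x01 sum_k] .
  have "0 \<le> esym ({1..n} - T) xh (k - m)"
    using x01 by (intro esym_nonneg) auto
  moreover have "0 < g_fun m n k * esym ({1..n} - T) xh (k - m)"
    using le pos by linarith
  ultimately have g_pos: "0 < g_fun m n k"
    by (simp add: zero_less_mult_iff)
  have "0 \<le> (\<Prod>i\<in>T. xh i)"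
    using x01 assms(6) by (intro prod_nonneg) auto
  then have "(\<Prod>i\<in>T. xh i) * esym {1..n} xh k
      \<le> (\<Prod>i\<in>T. xh i) * (g_fun m n k * esym ({1..n} - T) xh (k - m))"
    by (rule mult_left_mono[OF le])
  then show ?thesis
    unfolding prob using g_pos pos by (simp add: field_simps)
qed

end
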